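(* Let $\mathbb{H}^1_2$ be the complexified Heisenberg group. Then $\mathbb{R}^2$ factorizes $\mathbb{H}^1_2$ as a quotient: $\mathbb{R}^2$ is an h-quotient of $\mathbb{H}^1_2$, and every normal homogeneous subgroup $N$ of $\mathbb{H}^1_2$ such that $\mathbb{H}^1_2/N$ is h-isomorphic to $\mathbb{R}^2$ has a complementary homogeneous subgroup.
   Context: $\mathbb{H}^1_2$ is the connected simply connected Lie group whose Lie algebra $\mathfrak{h}^1_2$ has basis $R_0,R_1,R_2,R_3,Z_1,Z_2$ with the only nonzero brackets $[R_0,R_1]=[R_2,R_3]=Z_1$, $[R_0,R_2]=-[R_1,R_3]=Z_2$; it is stratified with first layer $\mathrm{span}\{R_0,\ldots,R_3\}$ and second layer $\mathrm{span}\{Z_1,Z_2\}$; dilations $\delta_r$ act by $r$ on the first layer and $r^2$ on the second. $\mathbb{R}^2$ is the graded group with one layer and dilations $v\mapsto rv$. h-homomorphism: group homomorphism commuting with dilations; h-isomorphism: invertible one. Homogeneous subgroup: closed connected simply connected Lie subgroup invariant under dilations. $\mathbb{R}^2$ is an h-quotient of $\mathbb{H}^1_2$ if $\mathbb{H}^1_2/N$ is h-isomorphic to $\mathbb{R}^2$ for some normal homogeneous subgroup $N$. Homogeneous subgroups $A,B$ are complementary if $AB=\mathbb{H}^1_2$ and $A\cap B=\{e\}$. *)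

theory Defs
  imports "HOL-Analysis.Analysis"
begin

text \<open>The complexified Heisenberg group H^1_2 in exponential coordinates.
  A point (a0,a1,a2,a3,z1,z2) stands for exp(a0 R0 + a1 R1 + a2 R2 + a3 R3 + z1 Z1 + z2 Z2).
  By the Baker-Campbell-Hausdorff formula (step 2) the product is
  exp X * exp Y = exp (X + Y + [X,Y]/2).\<close>

type_synonym H12 = "real \<times> real \<times> real \<times> real \<times> real \<times> real"

text \<open>The Lie bracket of two first-layer vectors, as coefficients of Z1 and Z2:
  [R0,R1] = [R2,R3] = Z1, [R0,R2] = Z2, [R1,R3] = -Z2.\<close>
fun hmul :: "H12 \<Rightarrow> H12 \<Rightarrow> H12" where
  "hmul (a0, a1, a2, a3, z1, z2) (b0, b1, b2, b3, w1, w2) =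
     (a0 + b0, a1 + b1, a2 + b2, a3 + b3,
      z1 + w1 + (a0 * b1 - a1 * b0 + a2 * b3 - a3 * b2) / 2,
      z2 + w2 + (a0 * b2 - a2 * b0 - a1 * b3 + a3 * b1) / 2)"

definition hunit :: H12 where "hunit = (0, 0, 0, 0, 0, 0)"

fun hinv :: "H12 \<Rightarrow> H12" where
  "hinv (a0, a1, a2, a3, z1, z2) = (- a0, - a1, - a2, - a3, - z1, - z2)"

fun hdil :: "real \<Rightarrow> H12 \<Rightarrow> H12" where
  "hdil r (a0, a1, a2, a3, z1, z2) = (r * a0, r * a1, r * a2, r * a3, r^2 * z1, r^2 * z2)"

definition hsubgroup :: "H12 set \<Rightarrow> bool" where
  "hsubgroup S \<longleftrightarrow> hunit \<in> S \<and> (\<forall>x\<in>S. \<forall>y\<in>S. hmul x y \<in> S) \<and> (\<forall>x\<in>S. hinv x \<in> S)"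

text \<open>Homogeneous subgroup: closed connected simply connected (Lie) subgroup invariant
  under dilations. (A closed subgroup of a Lie group is an embedded Lie subgroup.)\<close>
definition homogeneous_subgroup :: "H12 set \<Rightarrow> bool" where
  "homogeneous_subgroup S \<longleftrightarrow> hsubgroup S \<and> closed S \<and> connected S \<and> simply_connected S
     \<and> (\<forall>r>0. hdil r ` S \<subseteq> S)"

definition normal_hsubgroup :: "H12 set \<Rightarrow> bool" where
  "normal_hsubgroup N \<longleftrightarrow> (\<forall>g n. n \<in> N \<longrightarrow> hmul (hmul g n) (hinv g) \<in> N)"

definition hcoset :: "H12 \<Rightarrow> H12 set \<Rightarrow> H12 set" where
  "hcoset g N = hmul g ` N"

definition hquot :: "H12 set \<Rightarrow> H12 set set" where
  "hquot N = range (\<lambda>g. hcoset g N)"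

text \<open>H/N is h-isomorphic to R^2: there is a bijection psi from the cosets onto R^2 that is
  a group homomorphism (for the coset product gN * hN = ghN), commutes with the induced
  dilations (delta_r(gN) = delta_r(g)N) and is continuous for the quotient topology
  (i.e. psi composed with the projection is continuous).\<close>
definition quotient_h_iso_R2 :: "H12 set \<Rightarrow> bool" where
  "quotient_h_iso_R2 N \<longleftrightarrow>
     (\<exists>\<psi> :: H12 set \<Rightarrow> real \<times> real.
        bij_betw \<psi> (hquot N) UNIV
      \<and> (\<forall>g h. \<psi> (hcoset (hmul g h) N) = \<psi> (hcoset g N) + \<psi> (hcoset h N))
      \<and> (\<forall>r>0. \<forall>g. \<psi> (hcoset (hdil r g) N) = r *\<^sub>R \<psi> (hcoset g N))
      \<and> continuous_on UNIV (\<lambda>g. \<psi> (hcoset g N)))"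

definition is_h_quotient_R2 :: bool where
  "is_h_quotient_R2 \<longleftrightarrow>
     (\<exists>N. homogeneous_subgroup N \<and> normal_hsubgroup N \<and> quotient_h_iso_R2 N)"

definition complementary :: "H12 set \<Rightarrow> H12 set \<Rightarrow> bool" where
  "complementary A B \<longleftrightarrow> {hmul a b | a b. a \<in> A \<and> b \<in> B} = UNIV \<and> A \<inter> B = {hunit}"

end

theory Submission
  imports Defs
begin

text \<open>An h-homomorphism from \<open>\<bbbH>\<^sup>1\<^sub>2\<close> to a vector space kills the centre and is linear
  on the first layer, hence it is a linear map of the underlying vector space and its kernel is a
  homogeneous subgroup; conversely an h-isomorphism \<open>\<bbbH>\<^sup>1\<^sub>2/N \<cong> \<real>\<^sup>2\<close> exhibits \<open>N\<close> as the
  kernel of a surjective h-homomorphism. A complement of such a kernel is an abelian horizontal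
  plane mapped isomorphically onto \<open>\<real>\<^sup>2\<close>. Viewing the first layer as \<open>\<complex>\<^sup>2\<close>, complex lines
  are abelian planes, and a surjective linear map \<open>\<real>\<^sup>4 \<rightarrow> \<real>\<^sup>2\<close> is injective on some complex
  line: otherwise all its \<open>2 \<times> 2\<close> minors would vanish.\<close>

type_synonym H12_layer1 = "real \<times> real \<times> real \<times> real"

lemma H12_cases: obtains a0 a1 a2 a3 z1 z2 where "(g::H12) = (a0, a1, a2, a3, z1, z2)"
  by (metis prod.collapse)

lemma H12_layer1_cases: obtains a0 a1 a2 a3 where "(x::H12_layer1) = (a0, a1, a2, a3)"
  by (metis prod.collapse)

lemma hmul_assoc: "hmul (hmul x y) z = hmul x (hmul y z)"
  by (cases x rule: H12_cases; cases y rule: H12_cases; cases z rule: H12_cases)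
     (simp add: field_simps)

lemma hmul_hunit_left [simp]: "hmul hunit g = g"
  by (cases g rule: H12_cases) (simp add: hunit_def)

lemma hmul_hunit_right [simp]: "hmul g hunit = g"
  by (cases g rule: H12_cases) (simp add: hunit_def)

lemma hmul_hinv_left [simp]: "hmul (hinv g) g = hunit"
  by (cases g rule: H12_cases) (simp add: hunit_def algebra_simps)

lemma hmul_hinv_right [simp]: "hmul g (hinv g) = hunit"
  by (cases g rule: H12_cases) (simp add: hunit_def algebra_simps)

lemma hmul_hinv_cancel_left [simp]: "hmul g (hmul (hinv g) h) = h"
  by (simp flip: hmul_assoc)

section \<open>The first layer\<close>

fun horizontal :: "H12_layer1 \<Rightarrow> H12" where
  "horizontal (a0, a1, a2, a3) = (a0, a1, a2, a3, 0, 0)"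

fun hproj :: "H12 \<Rightarrow> H12_layer1" where
  "hproj (a0, a1, a2, a3, z1, z2) = (a0, a1, a2, a3)"

fun hbracket :: "H12_layer1 \<Rightarrow> H12_layer1 \<Rightarrow> real \<times> real" where
  "hbracket (a0, a1, a2, a3) (b0, b1, b2, b3) =
     (a0 * b1 - a1 * b0 + a2 * b3 - a3 * b2, a0 * b2 - a2 * b0 - a1 * b3 + a3 * b1)"

lemma linear_horizontal: "linear horizontal"
proof (rule linearI)
  fix x y :: H12_layer1 and c :: real
  show "horizontal (x + y) = horizontal x + horizontal y"
    by (cases x rule: H12_layer1_cases; cases y rule: H12_layer1_cases) simp
  show "horizontal (c *\<^sub>R x) = c *\<^sub>R horizontal x"
    by (cases x rule: H12_layer1_cases) simp
qed

lemma linear_hproj: "linear hproj"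
proof (rule linearI)
  fix g h :: H12 and c :: real
  show "hproj (g + h) = hproj g + hproj h"
    by (cases g rule: H12_cases; cases h rule: H12_cases) simp
  show "hproj (c *\<^sub>R g) = c *\<^sub>R hproj g"
    by (cases g rule: H12_cases) simp
qed

lemma hproj_horizontal [simp]: "hproj (horizontal x) = x"
  by (cases x rule: H12_layer1_cases) simp

lemma hproj_hmul: "hproj (hmul g h) = hproj g + hproj h"
  by (cases g rule: H12_cases; cases h rule: H12_cases) simp

lemma hproj_hinv: "hproj (hinv g) = - hproj g"
  by (cases g rule: H12_cases) simp

lemma hproj_hdil: "hproj (hdil r g) = r *\<^sub>R hproj g"
  by (cases g rule: H12_cases) simp

lemma horizontal_0: "horizontal 0 = hunit"
  by (simp add: zero_prod_def hunit_def)

lemma hinv_horizontal: "hinv (horizontal x) = horizontal (- x)"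
  by (cases x rule: H12_layer1_cases) simp

lemma hdil_horizontal: "hdil r (horizontal x) = horizontal (r *\<^sub>R x)"
  by (cases x rule: H12_layer1_cases) simp

lemma hmul_horizontal_commuting:
  "hbracket x y = 0 \<Longrightarrow> hmul (horizontal x) (horizontal y) = horizontal (x + y)"
  by (cases x rule: H12_layer1_cases; cases y rule: H12_layer1_cases) (simp add: zero_prod_def)

lemma hbracket_plane:
  "hbracket (s *\<^sub>R u + t *\<^sub>R v) (s' *\<^sub>R u + t' *\<^sub>R v) = (s * t' - t * s') *\<^sub>R hbracket u v"
  by (cases u rule: H12_layer1_cases; cases v rule: H12_layer1_cases) (simp add: algebra_simps)

lemma homogeneous_subgroup_horizontal_isotropic:
  assumes S: "subspace S" and isotropic: "\<And>x y. x \<in> S \<Longrightarrow> y \<in> S \<Longrightarrow> hbracket x y = 0"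
  shows "homogeneous_subgroup (horizontal ` S)"
proof -
  have "subspace (horizontal ` S)"
    using S linear_horizontal by (rule linear_subspace_image[rotated])
  then have topological: "closed (horizontal ` S) \<and> connected (horizontal ` S) \<and> simply_connected (horizontal ` S)"
    using closed_subspace subspace_imp_convex convex_connected convex_imp_simply_connected by blast
  have "hunit \<in> horizontal ` S"
    using S by (auto simp flip: horizontal_0 intro: subspace_0)
  moreover have "hmul (horizontal x) (horizontal y) \<in> horizontal ` S" if "x \<in> S" "y \<in> S" for x y
    using that S isotropic by (simp add: hmul_horizontal_commuting subspace_add)
  moreover have "hinv (horizontal x) \<in> horizontal ` S" if "x \<in> S" for x
    using that S by (simp add: hinv_horizontal subspace_neg)
  moreover have "hdil r (horizontal x) \<in> horizontal ` S" if "x \<in> S" for r x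
    using that S by (simp add: hdil_horizontal subspace_scale)
  ultimately show ?thesis
    using topological by (auto simp: homogeneous_subgroup_def hsubgroup_def simp del: horizontal.simps)
qed

section \<open>Homogeneous homomorphisms\<close>

locale h_hom =
  fixes \<phi> :: "H12 \<Rightarrow> 'a::real_vector"
  assumes hom: "\<phi> (hmul g h) = \<phi> g + \<phi> h"
    and dil: "r > 0 \<Longrightarrow> \<phi> (hdil r g) = r *\<^sub>R \<phi> g"
begin

lemma map_hunit [simp]: "\<phi> hunit = 0"
  using hom[of hunit hunit] by simp

lemma map_hinv: "\<phi> (hinv g) = - \<phi> g"
  using hom[of "hinv g" g] by (simp add: eq_neg_iff_add_eq_0)

lemma map_central: "\<phi> (0, 0, 0, 0, z1, z2) = 0"
proof -
  define c :: H12 where "c = (0, 0, 0, 0, z1, z2)"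
  have "(\<phi> c + \<phi> c) + (\<phi> c + \<phi> c) = \<phi> (hmul (hmul c c) (hmul c c))"
    by (simp only: hom)
  also have "hmul (hmul c c) (hmul c c) = hdil 2 c"
    by (simp add: c_def)
  also have "\<phi> (hdil 2 c) = \<phi> c + \<phi> c"
    using dil[of 2 c] by (simp add: scaleR_2 del: hdil.simps)
  finally have "2 *\<^sub>R \<phi> c = 0"
    by (simp add: scaleR_2)
  then show ?thesis
    by (simp add: c_def)
qed

lemma map_horizontal_hproj: "\<phi> (horizontal (hproj g)) = \<phi> g"
proof (cases g rule: H12_cases)
  case (1 a0 a1 a2 a3 z1 z2)
  then have "hmul (horizontal (hproj g)) (0, 0, 0, 0, z1, z2) = g"
    by simp
  then have "\<phi> g = \<phi> (horizontal (hproj g)) + \<phi> (0, 0, 0, 0, z1, z2)"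
    by (metis hom)
  then show ?thesis
    by (simp add: map_central)
qed

lemma map_eq_if_hproj_eq: "hproj g = hproj h \<Longrightarrow> \<phi> g = \<phi> h"
  by (metis map_horizontal_hproj)

lemma linear_comp_horizontal: "linear (\<phi> \<circ> horizontal)"
proof (rule linearI)
  fix x y :: H12_layer1
  have "\<phi> (horizontal (x + y)) = \<phi> (hmul (horizontal x) (horizontal y))"
    by (rule map_eq_if_hproj_eq) (simp add: hproj_hmul)
  then show "(\<phi> \<circ> horizontal) (x + y) = (\<phi> \<circ> horizontal) x + (\<phi> \<circ> horizontal) y"
    by (simp add: hom)
next
  fix c :: real and x :: H12_layer1
  consider "c > 0" | "c = 0" | "c < 0"
    by linarith
  then show "(\<phi> \<circ> horizontal) (c *\<^sub>R x) = c *\<^sub>R (\<phi> \<circ> horizontal) x"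
  proof cases
    case 1
    then show ?thesis
      by (simp add: dil flip: hdil_horizontal)
  next
    case 2
    then show ?thesis
      by (simp add: horizontal_0)
  next
    case 3
    have "\<phi> (horizontal (c *\<^sub>R x)) = \<phi> (hinv (hdil (- c) (horizontal x)))"
      by (rule map_eq_if_hproj_eq) (simp add: hproj_hinv hproj_hdil)
    then show ?thesis
      using 3 by (simp add: map_hinv dil)
  qed
qed

lemma linear: "linear \<phi>"
proof -
  have "\<phi> = (\<phi> \<circ> horizontal) \<circ> hproj"
    by (simp add: fun_eq_iff map_horizontal_hproj)
  then show ?thesis
    using linear_compose[OF linear_hproj linear_comp_horizontal] by simp
qed

lemma hsubgroup_kernel: "hsubgroup {g. \<phi> g = 0}"
  by (simp add: hsubgroup_def hom map_hinv)

lemma normal_hsubgroup_kernel: "normal_hsubgroup {g. \<phi> g = 0}"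
  by (simp add: normal_hsubgroup_def hom map_hinv)

lemma homogeneous_subgroup_kernel: "homogeneous_subgroup {g. \<phi> g = 0}"
proof -
  have "subspace {g. \<phi> g = 0}"
    using linear by (rule linear_subspace_kernel)
  then have "closed {g. \<phi> g = 0} \<and> connected {g. \<phi> g = 0} \<and> simply_connected {g. \<phi> g = 0}"
    using closed_subspace subspace_imp_convex convex_connected convex_imp_simply_connected by blast
  moreover have "hdil r ` {g. \<phi> g = 0} \<subseteq> {g. \<phi> g = 0}" if "r > 0" for r
    using that by (simp add: image_subset_iff dil del: hdil.simps)
  ultimately show ?thesis
    using hsubgroup_kernel by (simp add: homogeneous_subgroup_def)
qed

lemma hcoset_kernel: "hcoset g {g. \<phi> g = 0} = {x. \<phi> x = \<phi> g}"
proof safe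
  fix x
  assume "\<phi> x = \<phi> g"
  then have "x = hmul g (hmul (hinv g) x)" and "\<phi> (hmul (hinv g) x) = 0"
    by (simp_all add: hom map_hinv)
  then show "x \<in> hcoset g {g. \<phi> g = 0}"
    unfolding hcoset_def by blast
qed (auto simp: hcoset_def hom)

lemma complementary_kernel:
  assumes A: "hsubgroup A" and bij: "bij_betw \<phi> A UNIV"
  shows "complementary A {g. \<phi> g = 0}"
proof -
  have "g \<in> {hmul a b | a b. a \<in> A \<and> b \<in> {g. \<phi> g = 0}}" for g
  proof -
    obtain a where "a \<in> A" "\<phi> a = \<phi> g"
      using bij unfolding bij_betw_def by (metis UNIV_I imageE)
    then show ?thesis
      by (intro CollectI exI[of _ a] exI[of _ "hmul (hinv a) g"]) (simp add: hom map_hinv)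
  qed
  moreover have "x = hunit" if "x \<in> A" "\<phi> x = 0" for x
    using that A bij by (simp add: hsubgroup_def bij_betw_def inj_on_def)
  ultimately show ?thesis
    using A by (auto simp: complementary_def hsubgroup_def)
qed

end

lemma hcoset_hunit [simp]: "hcoset hunit N = N"
  by (simp add: hcoset_def)

lemma hcoset_member: "hsubgroup N \<Longrightarrow> g \<in> hcoset g N"
  unfolding hsubgroup_def hcoset_def by (metis hmul_hunit_right image_eqI)

lemma hcoset_subgroup_member:
  assumes "hsubgroup N" and "g \<in> N"
  shows "hcoset g N = N"
proof
  show "hcoset g N \<subseteq> N"
    using assms unfolding hsubgroup_def hcoset_def by blast
  show "N \<subseteq> hcoset g N"
  proof
    fix n
    assume "n \<in> N"
    then have "hmul (hinv g) n \<in> N"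
      using assms unfolding hsubgroup_def by blast
    then show "n \<in> hcoset g N"
      unfolding hcoset_def by (metis hmul_hinv_cancel_left image_eqI)
  qed
qed

lemma quotient_h_iso_R2_kernel:
  fixes \<phi> :: "H12 \<Rightarrow> real \<times> real"
  assumes "h_hom \<phi>" and "surj \<phi>"
  shows "quotient_h_iso_R2 {g. \<phi> g = 0}"
proof -
  interpret h_hom \<phi> by fact
  let ?N = "{g. \<phi> g = 0}"
  define \<psi> where "\<psi> S = \<phi> (SOME x. x \<in> S)" for S
  have \<psi>_hcoset: "\<psi> (hcoset g ?N) = \<phi> g" for g
    unfolding \<psi>_def hcoset_kernel by (rule someI2[of _ g]) auto
  have "inj_on \<psi> (hquot ?N)"
    by (rule inj_onI) (clarsimp simp: hquot_def \<psi>_hcoset, simp add: hcoset_kernel)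
  moreover have "\<psi> ` hquot ?N = UNIV"
    using \<open>surj \<phi>\<close> by (auto simp: hquot_def image_image \<psi>_hcoset)
  moreover have "continuous_on UNIV \<phi>"
    using linear by (simp add: linear_conv_bounded_linear linear_continuous_on)
  ultimately show ?thesis
    unfolding quotient_h_iso_R2_def
    by (intro exI[of _ \<psi>]) (simp add: bij_betw_def \<psi>_hcoset hom dil del: hdil.simps)
qed

lemma quotient_h_iso_R2_imp_kernel:
  assumes N: "hsubgroup N" and "quotient_h_iso_R2 N"
  obtains \<phi> :: "H12 \<Rightarrow> real \<times> real" where "h_hom \<phi>" "surj \<phi>" "N = {g. \<phi> g = 0}"
proof -
  obtain \<psi> :: "H12 set \<Rightarrow> real \<times> real" where
    bij: "bij_betw \<psi> (hquot N) UNIV"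
    and hom: "\<And>g h. \<psi> (hcoset (hmul g h) N) = \<psi> (hcoset g N) + \<psi> (hcoset h N)"
    and dil: "\<And>r g. r > 0 \<Longrightarrow> \<psi> (hcoset (hdil r g) N) = r *\<^sub>R \<psi> (hcoset g N)"
    using \<open>quotient_h_iso_R2 N\<close> unfolding quotient_h_iso_R2_def by blast
  define \<phi> where "\<phi> g = \<psi> (hcoset g N)" for g
  interpret h_hom \<phi>
    by unfold_locales (simp_all add: \<phi>_def hom dil del: hdil.simps)
  have "surj \<phi>"
    using bij unfolding bij_betw_def hquot_def \<phi>_def by (metis image_image)
  moreover have "N = {g. \<phi> g = 0}"
  proof safe
    fix g
    assume "g \<in> N"
    then show "\<phi> g = 0"
      using N map_hunit unfolding \<phi>_def by (simp add: hcoset_subgroup_member)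
  next
    fix g
    assume "\<phi> g = 0"
    then have "\<psi> (hcoset g N) = \<psi> (hcoset hunit N)"
      using map_hunit unfolding \<phi>_def by simp
    then have "hcoset g N = N"
      using bij unfolding bij_betw_def inj_on_def hquot_def by (metis hcoset_hunit rangeI)
    then show "g \<in> N"
      using N hcoset_member by blast
  qed
  ultimately show ?thesis
    using that h_hom_axioms by blast
qed

section \<open>Complex lines in the first layer\<close>

definition det2 :: "real \<times> real \<Rightarrow> real \<times> real \<Rightarrow> real" where
  "det2 x y = fst x * snd y - snd x * fst y"

lemma bij_plane_coordinates:
  fixes p q :: "real \<times> real"
  assumes "det2 p q \<noteq> 0"
  shows "bij (\<lambda>(s, t). s *\<^sub>R p + t *\<^sub>R q)"
proof -
  let ?f = "\<lambda>(s, t). s *\<^sub>R p + t *\<^sub>R q"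
  have lin: "linear ?f"
    by (rule linearI) (auto simp: algebra_simps)
  have "s = 0 \<and> t = 0" if "s *\<^sub>R p + t *\<^sub>R q = 0" for s t
  proof -
    have "s * fst p + t * fst q = 0" "s * snd p + t * snd q = 0"
      using that by (simp_all add: prod_eq_iff)
    then have "s * det2 p q = 0" "t * det2 p q = 0"
      unfolding det2_def by algebra+
    then show ?thesis
      using assms by simp
  qed
  then have "inj ?f"
    using lin by (auto simp: linear_injective_0 zero_prod_def)
  then show ?thesis
    using lin linear_inj_imp_surj by (blast intro: bijI)
qed

text \<open>Identifying the first layer with \<open>\<complex>\<^sup>2\<close> via
  \<open>a\<^sub>0R\<^sub>0 + a\<^sub>1R\<^sub>1 + a\<^sub>2R\<^sub>2 + a\<^sub>3R\<^sub>3 \<mapsto> (a\<^sub>0 + i a\<^sub>3, a\<^sub>1 + i a\<^sub>2)\<close>,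
  the bracket becomes the complex determinant and \<open>cplx_i\<close> is multiplication by \<open>i\<close>;
  hence every complex line is abelian.\<close>

fun cplx_i :: "H12_layer1 \<Rightarrow> H12_layer1" where
  "cplx_i (a0, a1, a2, a3) = (- a3, - a2, a1, a0)"

lemma hbracket_cplx_i: "hbracket u (cplx_i u) = 0"
  by (cases u rule: H12_layer1_cases) (simp add: algebra_simps zero_prod_def)

lemma linear_layer1_expand:
  assumes "linear L"
  shows "L (a0, a1, a2, a3) =
    a0 *\<^sub>R L (1, 0, 0, 0) + a1 *\<^sub>R L (0, 1, 0, 0) + a2 *\<^sub>R L (0, 0, 1, 0) + a3 *\<^sub>R L (0, 0, 0, 1)"
proof -
  have "L (a0, a1, a2, a3) =
    L (a0 *\<^sub>R (1, 0, 0, 0) + a1 *\<^sub>R (0, 1, 0, 0) + a2 *\<^sub>R (0, 0, 1, 0) + a3 *\<^sub>R (0, 0, 0, 1))"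
    by simp
  then show ?thesis
    by (simp only: linear_add[OF assms] linear_scale[OF assms])
qed

text \<open>If \<open>L\<close> were degenerate on every complex line, then already the four lines through
  \<open>e\<^sub>0, e\<^sub>1, e\<^sub>0 + e\<^sub>1, e\<^sub>0 + e\<^sub>2\<close> together with the Pluecker relation
  \<open>m\<^sub>0\<^sub>1m\<^sub>2\<^sub>3 - m\<^sub>0\<^sub>2m\<^sub>1\<^sub>3 + m\<^sub>0\<^sub>3m\<^sub>1\<^sub>2 = 0\<close> force all \<open>2 \<times> 2\<close> minors
  \<open>m\<^sub>i\<^sub>j\<close> of \<open>L\<close> to vanish.\<close>

lemma det2_eq_0_if_complex_lines_degenerate:
  fixes L :: "H12_layer1 \<Rightarrow> real \<times> real"
  assumes "linear L" and degenerate: "\<And>u. det2 (L u) (L (cplx_i u)) = 0"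
  shows "det2 (L a) (L b) = 0"
proof -
  obtain p0 q0 p1 q1 p2 q2 p3 q3 where
    e: "L (1, 0, 0, 0) = (p0, q0)" "L (0, 1, 0, 0) = (p1, q1)"
       "L (0, 0, 1, 0) = (p2, q2)" "L (0, 0, 0, 1) = (p3, q3)"
    by (metis prod.collapse)
  have L: "L (x0, x1, x2, x3) =
      (x0 * p0 + x1 * p1 + x2 * p2 + x3 * p3, x0 * q0 + x1 * q1 + x2 * q2 + x3 * q3)" for x0 x1 x2 x3
    using linear_layer1_expand[OF \<open>linear L\<close>] e by simp
  have m03: "p0 * q3 - q0 * p3 = 0"
    using degenerate[of "(1, 0, 0, 0)"] by (simp add: det2_def L)
  have m12: "p1 * q2 - q1 * p2 = 0"
    using degenerate[of "(0, 1, 0, 0)"] by (simp add: det2_def L)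
  have m13: "p1 * q3 - q1 * p3 = - (p0 * q2 - q0 * p2)"
    using degenerate[of "(1, 1, 0, 0)"] m03 m12 by (simp add: det2_def L) algebra
  have m23: "p2 * q3 - q2 * p3 = p0 * q1 - q0 * p1"
    using degenerate[of "(1, 0, 1, 0)"] m03 m12 by (simp add: det2_def L) algebra
  have plucker: "(p0 * q1 - q0 * p1) * (p2 * q3 - q2 * p3) - (p0 * q2 - q0 * p2) * (p1 * q3 - q1 * p3)
      + (p0 * q3 - q0 * p3) * (p1 * q2 - q1 * p2) = 0"
    by algebra
  have "(p0 * q1 - q0 * p1) * (p0 * q1 - q0 * p1) + (p0 * q2 - q0 * p2) * (p0 * q2 - q0 * p2) = 0"
    using plucker m03 m13 m23 by algebra
  then have m01: "p0 * q1 - q0 * p1 = 0" and m02: "p0 * q2 - q0 * p2 = 0"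
    using sum_squares_eq_zero_iff by blast+
  obtain a0 a1 a2 a3 b0 b1 b2 b3 where ab: "a = (a0, a1, a2, a3)" "b = (b0, b1, b2, b3)"
    by (metis prod.collapse)
  have cauchy_binet: "det2 (L (a0, a1, a2, a3)) (L (b0, b1, b2, b3)) =
      (a0 * b1 - a1 * b0) * (p0 * q1 - q0 * p1) + (a0 * b2 - a2 * b0) * (p0 * q2 - q0 * p2)
    + (a0 * b3 - a3 * b0) * (p0 * q3 - q0 * p3) + (a1 * b2 - a2 * b1) * (p1 * q2 - q1 * p2)
    + (a1 * b3 - a3 * b1) * (p1 * q3 - q1 * p3) + (a2 * b3 - a3 * b2) * (p2 * q3 - q2 * p3)"
    by (simp add: det2_def L) algebra
  show ?thesis
    unfolding ab cauchy_binet m13 m23 m01 m02 m03 m12 by simp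
qed

lemma complex_line_transversal:
  fixes L :: "H12_layer1 \<Rightarrow> real \<times> real"
  assumes "linear L" and "surj L"
  obtains u where "det2 (L u) (L (cplx_i u)) \<noteq> 0"
proof -
  obtain a b where "L a = (1, 0)" "L b = (0, 1)"
    using \<open>surj L\<close> by (metis surjD)
  then have "det2 (L a) (L b) \<noteq> 0"
    by (simp add: det2_def)
  then show ?thesis
    using that det2_eq_0_if_complex_lines_degenerate[OF \<open>linear L\<close>] by blast
qed

lemma kernel_has_complement:
  fixes \<phi> :: "H12 \<Rightarrow> real \<times> real"
  assumes "h_hom \<phi>" and "surj \<phi>"
  shows "\<exists>A. homogeneous_subgroup A \<and> complementary A {g. \<phi> g = 0}"
proof -
  interpret h_hom \<phi> by fact
  define L where "L = \<phi> \<circ> horizontal"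
  have "surj L"
    using \<open>surj \<phi>\<close> unfolding L_def by (metis comp_apply map_horizontal_hproj surj_def)
  then obtain u where u: "det2 (L u) (L (cplx_i u)) \<noteq> 0"
    using complex_line_transversal linear_comp_horizontal unfolding L_def by blast
  define P where "P = (\<lambda>(s, t). s *\<^sub>R u + t *\<^sub>R cplx_i u)"
  define A where "A = horizontal ` range P"
  have "linear P"
    unfolding P_def by (rule linearI) (auto simp: algebra_simps)
  then have "subspace (range P)"
    using linear_subspace_image subspace_UNIV by blast
  moreover have "hbracket x y = 0" if "x \<in> range P" "y \<in> range P" for x y
    using that by (auto simp: P_def hbracket_plane hbracket_cplx_i)
  ultimately have "homogeneous_subgroup A"
    unfolding A_def by (rule homogeneous_subgroup_horizontal_isotropic)
  have "linear L"
    unfolding L_def by (rule linear_comp_horizontal)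
  then have "L \<circ> P = (\<lambda>(s, t). s *\<^sub>R L u + t *\<^sub>R L (cplx_i u))"
    by (simp add: fun_eq_iff P_def linear_add linear_scale)
  then have bij: "bij (\<phi> \<circ> horizontal \<circ> P)"
    using bij_plane_coordinates[OF u] by (simp add: L_def)
  have "A = range (horizontal \<circ> P)"
    by (simp add: A_def image_comp)
  then have "bij_betw \<phi> A UNIV"
    using bij unfolding bij_betw_def bij_def
    by (metis comp_assoc image_comp inj_on_imageI)
  then have "complementary A {g. \<phi> g = 0}"
    using \<open>homogeneous_subgroup A\<close> by (simp add: homogeneous_subgroup_def complementary_kernel)
  with \<open>homogeneous_subgroup A\<close> show ?thesis
    by blast
qed

lemma h_hom_first_coordinates: "h_hom (\<lambda>g :: H12. (fst g, fst (snd g)))"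
proof
  fix g h :: H12 and r :: real
  show "(fst (hmul g h), fst (snd (hmul g h))) = (fst g, fst (snd g)) + (fst h, fst (snd h))"
    by (cases g rule: H12_cases; cases h rule: H12_cases) simp
  show "(fst (hdil r g), fst (snd (hdil r g))) = r *\<^sub>R (fst g, fst (snd g))"
    by (cases g rule: H12_cases) simp
qed

lemma R2_is_h_quotient: "is_h_quotient_R2"
proof -
  let ?\<phi> = "\<lambda>g :: H12. (fst g, fst (snd g))"
  interpret h_hom ?\<phi>
    by (rule h_hom_first_coordinates)
  have "surj ?\<phi>"
    by (rule surjI[of _ "\<lambda>y. (fst y, snd y, 0, 0, 0, 0)"]) simp
  then show ?thesis
    unfolding is_h_quotient_R2_def
    using homogeneous_subgroup_kernel normal_hsubgroup_kernel
      quotient_h_iso_R2_kernel[OF h_hom_first_coordinates] by blast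
qed

theorem proposition11p22:
  shows "is_h_quotient_R2 \<and>
    (\<forall>N. homogeneous_subgroup N \<and> normal_hsubgroup N \<and> quotient_h_iso_R2 N \<longrightarrow>
       (\<exists>A. homogeneous_subgroup A \<and> complementary A N))"
proof (intro conjI allI impI)
  show "is_h_quotient_R2"
    by (rule R2_is_h_quotient)
  fix N
  assume "homogeneous_subgroup N \<and> normal_hsubgroup N \<and> quotient_h_iso_R2 N"
  then obtain \<phi> :: "H12 \<Rightarrow> real \<times> real" where "h_hom \<phi>" "surj \<phi>" "N = {g. \<phi> g = 0}"
    using quotient_h_iso_R2_imp_kernel unfolding homogeneous_subgroup_def by blast
  then show "\<exists>A. homogeneous_subgroup A \<and> complementary A N"
    using kernel_has_complement by blast
qed

end
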